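(* Let $\mathscr{M}_4(5)$ be the regular map on Bring's surface $\overline{\mathbb{H}/H_4(5)}$ whose vertices are labelled by Hecke--Farey coordinates modulo $5$. The map $z\mapsto z+\sqrt2$, applied to Hecke--Farey coordinates, induces a rotation of $\mathscr{M}_4(5)$ through angle $2\pi/5$ about the centre vertex $\frac{1}{0\sqrt2}$.
   Context: $H_4$ is the Hecke group generated by $T(z)=z+\sqrt2$ and $S(z)=-1/z$ on the upper half-plane $\mathbb{H}$. The universal 4-gonal map $\hat{\mathscr{M}}_4$ is the map on $\mathbb{H}$ whose vertices are the images of $\infty$ under $H_4$ (the real numbers $\frac{a}{c\sqrt2}$ and $\frac{b\sqrt2}{d}$ with $a,b,c,d\in\mathbb{Z}$, $\gcd(a,c)=\gcd(b,d)=1$, including $\infty$) and whose edges are the images of the imaginary axis under $H_4$; $\frac{a}{c\sqrt2}$ and $\frac{b\sqrt2}{d}$ are joined by an edge iff $ad-2bc=\pm1$. $H_4(5)$ is the principal congruence subgroup of level 5: transformations $z\mapsto\frac{az+b\sqrt2}{c\sqrt2 z+d}$ with $a,b,c,d\in\mathbb{Z}$, $ad-2bc=1$, $a\equiv d\equiv\pm1\pmod5$, $b\equiv c\equiv0\pmod5$. $\mathscr{M}_4(5)=\hat{\mathscr{M}}_4/H_4(5)$ is a regular map of type $\{5,4\}$ (quadrilateral faces, vertices of valency 5) with 30 vertices, 60 edges and 24 faces on the genus-4 surface $\overline{\mathbb{H}/H_4(5)}$ (Bring's surface). Its vertices are labelled by Hecke--Farey coordinates modulo 5: expressions $\frac{a}{c\sqrt2}$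 or $\frac{b\sqrt2}{d}$ with $a,b,c,d\in\mathbb{Z}_5$, where $\frac{a}{c\sqrt2}$ is identified with $\frac{-a}{-c\sqrt2}$ (and similarly for the other type); two such vertices $\frac{a}{c\sqrt2}$, $\frac{b\sqrt2}{d}$ are adjacent iff $ad-2bc\equiv\pm1\pmod5$. The vertex $\frac{1}{0\sqrt2}$ (image of $\infty$) is called the centre. *)

theory Defs
  imports Main "HOL-Library.Numeral_Type"
begin

text \<open>Hecke--Farey coordinates modulo 5.  A label is a triple (k, x, y) with x y in Z/5Z
 (the type 5 of HOL-Library.Numeral_Type).  k = False encodes the expression a/(c sqrt2)
 with (x,y) = (a,c); k = True encodes b sqrt2 / d with (x,y) = (b,d).
 A vertex of M_4(5) is the class of a label modulo the identification (x,y) ~ (-x,-y).\<close>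

type_synonym hf_label = "bool \<times> 5 \<times> 5"
type_synonym hf_vertex = "hf_label set"

definition hfv :: "bool \<Rightarrow> 5 \<Rightarrow> 5 \<Rightarrow> hf_vertex" where
  "hfv k x y = {(k, x, y), (k, -x, -y)}"

text \<open>Vertex set: all labels with (x,y) \<noteq> (0,0) (reductions of coprime pairs).\<close>
definition M45_vertices :: "hf_vertex set" where
  "M45_vertices = {hfv k x y | k x y. (x, y) \<noteq> (0, 0)}"

definition M45_adj :: "hf_vertex \<Rightarrow> hf_vertex \<Rightarrow> bool" where
  "M45_adj u v \<longleftrightarrow>
     (\<exists>a c b d. (False, a, c) \<in> u \<and> (True, b, d) \<in> v \<and>
        (a * d - 2 * b * c = 1 \<or> a * d - 2 * b * c = -1)) \<or>
     (\<exists>a c b d. (False, a, c) \<in> v \<and> (True, b, d) \<in> u \<and>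
        (a * d - 2 * b * c = 1 \<or> a * d - 2 * b * c = -1))"

text \<open>The centre 1/(0 sqrt2), image of infinity.\<close>
definition centre :: hf_vertex where
  "centre = hfv False 1 0"

text \<open>T(z) = z + sqrt2 on labels: a/(c sqrt2) + sqrt2 = (a+2c)/(c sqrt2),
  b sqrt2/d + sqrt2 = (b+d) sqrt2/d.\<close>
fun T_lab :: "hf_label \<Rightarrow> hf_label" where
  "T_lab (False, a, c) = (False, a + 2 * c, c)"
| "T_lab (True, b, d) = (True, b + d, d)"

text \<open>S(z) = -1/z on labels: -1/(a/(c sqrt2)) = (-c) sqrt2/a,
  -1/(b sqrt2/d) = (-d)/(b sqrt2).\<close>
fun S_lab :: "hf_label \<Rightarrow> hf_label" where
  "S_lab (False, a, c) = (True, -c, a)"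
| "S_lab (True, b, d) = (False, -d, b)"

definition T_vert :: "hf_vertex \<Rightarrow> hf_vertex" where
  "T_vert u = T_lab ` u"

definition S_vert :: "hf_vertex \<Rightarrow> hf_vertex" where
  "S_vert u = S_lab ` u"

text \<open>Faces of M_4(5): the images under H_4 (generated by T and S) of the
  fundamental quadrilateral face with vertices infinity, 0, 1/sqrt2, sqrt2
  (faces recorded by their vertex sets).\<close>
definition base_face :: "hf_vertex set" where
  "base_face = {hfv False 1 0, hfv True 0 1, hfv False 1 1, hfv True 1 1}"

inductive_set M45_faces :: "hf_vertex set set" where
  base: "base_face \<in> M45_faces"
| T: "F \<in> M45_faces \<Longrightarrow> T_vert ` F \<in> M45_faces"
| S: "F \<in> M45_faces \<Longrightarrow> S_vert ` F \<in> M45_faces"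

end

theory Submission
  imports Defs
begin

text \<open>On labels, T acts by the unipotent matrices [[1,2],[0,1]] on pairs (a,c) and [[1,1],[0,1]]
  on pairs (b,d); both preserve the quantity ad - 2bc defining adjacency, and both have order 5
  over Z/5Z.  T fixes the centre 1/(0 sqrt2), whose neighbours are exactly the vertices b sqrt2/1,
  and T sends b sqrt2/1 to (b+1) sqrt2/1.  Hence T permutes the five neighbours of the centre
  cyclically, and T^b maps the base face onto a face containing the centre, b sqrt2/1 and
  (b+1) sqrt2/1.\<close>

lemma hfv_uminus: "hfv k (-x) (-y) = hfv k x y"
  by (auto simp: hfv_def)

lemma hfv_eq_if_mem: "(k', x', y') \<in> hfv k x y \<Longrightarrow> hfv k x y = hfv k' x' y'"
  by (auto simp: hfv_def)

lemma ex_of_nat_5: "\<exists>n. (b::5) = of_nat n"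
proof (induction b)
  case (of_int z)
  then show ?case by (metis of_nat_nat)
qed

lemma funpow_T_lab_5: "T_lab ^^ 5 = id"
proof
  fix p :: hf_label
  obtain k x y where p: "p = (k, x, y)" by (cases p)
  have ten: "(10::5) = 0" and five: "(5::5) = 0" by simp_all
  have "x + 2 * y + 2 * y + 2 * y + 2 * y + 2 * y = x" "x + y + y + y + y + y = x"
    by (simp_all add: algebra_simps ten five)
  then show "(T_lab ^^ 5) p = id p"
    by (cases k) (simp_all add: p numeral_eq_Suc)
qed

lemma funpow_T_vert: "(T_vert ^^ n) u = (T_lab ^^ n) ` u"
  by (induction n) (simp_all add: T_vert_def image_comp)

lemma funpow_T_vert_5: "T_vert ^^ 5 = id"
  by (simp add: fun_eq_iff funpow_T_vert funpow_T_lab_5)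

lemma funpow_T_vert_4_inverse: "T_vert ^^ 4 \<circ> T_vert = id" "T_vert \<circ> T_vert ^^ 4 = id"
  using funpow_T_vert_5 funpow_Suc_right[of 4 T_vert] funpow.simps(2)[of 4 T_vert]
  by simp_all

lemma T_vert_hfv:
  "T_vert (hfv False a c) = hfv False (a + 2 * c) c"
  "T_vert (hfv True b d) = hfv True (b + d) d"
  by (auto simp: T_vert_def hfv_def algebra_simps)

lemma hfv_in_vertices: "(x, y) \<noteq> (0, 0) \<Longrightarrow> hfv k x y \<in> M45_vertices"
  by (auto simp: M45_vertices_def)

lemma T_vert_in_vertices:
  assumes "u \<in> M45_vertices"
  shows "T_vert u \<in> M45_vertices"
proof -
  obtain k x y where u: "u = hfv k x y" and xy: "(x, y) \<noteq> (0, 0)"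
    using assms by (auto simp: M45_vertices_def)
  show ?thesis
    using xy by (cases k) (auto simp: u T_vert_hfv intro!: hfv_in_vertices)
qed

lemma funpow_T_vert_in_vertices: "u \<in> M45_vertices \<Longrightarrow> (T_vert ^^ n) u \<in> M45_vertices"
  by (induction n) (simp_all add: T_vert_in_vertices)

lemma bij_betw_T_vert: "bij_betw T_vert M45_vertices M45_vertices"
proof (rule bij_betw_byWitness[where f' = "T_vert ^^ 4"])
  show "\<forall>u\<in>M45_vertices. (T_vert ^^ 4) (T_vert u) = u"
    "\<forall>u\<in>M45_vertices. T_vert ((T_vert ^^ 4) u) = u"
    using funpow_T_vert_4_inverse by (simp_all add: fun_eq_iff)
qed (auto intro: T_vert_in_vertices funpow_T_vert_in_vertices)

fun labels_adj :: "hf_label \<Rightarrow> hf_label \<Rightarrow> bool" where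
  "labels_adj (False, a, c) (True, b, d) \<longleftrightarrow> a * d - 2 * b * c = 1 \<or> a * d - 2 * b * c = -1"
| "labels_adj _ _ \<longleftrightarrow> False"

lemma bex_labels_adj: "(\<exists>p\<in>u. \<exists>q\<in>v. labels_adj p q) \<longleftrightarrow>
  (\<exists>a c b d. (False, a, c) \<in> u \<and> (True, b, d) \<in> v \<and> (a * d - 2 * b * c = 1 \<or> a * d - 2 * b * c = -1))"
  by (metis labels_adj.simps(1) labels_adj.elims(2))

lemma M45_adj_iff_labels_adj: "M45_adj u v \<longleftrightarrow> (\<exists>p\<in>u. \<exists>q\<in>v. labels_adj p q \<or> labels_adj q p)"
  unfolding M45_adj_def bex_labels_adj[symmetric] by blast

lemma labels_adj_T_lab: "labels_adj (T_lab p) (T_lab q) \<longleftrightarrow> labels_adj p q"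
proof -
  obtain k a c l b d where p: "p = (k, a, c)" and q: "q = (l, b, d)"
    by (cases p, cases q)
  have "(a + 2 * c) * d - 2 * (b + d) * c = a * d - 2 * b * c"
    by (simp add: algebra_simps)
  then show ?thesis
    by (cases k; cases l) (simp_all add: p q)
qed

lemma M45_adj_T_vert: "M45_adj (T_vert u) (T_vert v) \<longleftrightarrow> M45_adj u v"
  by (simp add: M45_adj_iff_labels_adj T_vert_def labels_adj_T_lab)

lemma funpow_image_T_vert_faces:
  assumes "F \<in> M45_faces"
  shows "(T_vert ^^ n) ` F \<in> M45_faces"
proof (induction n)
  case (Suc n)
  then have "T_vert ` (T_vert ^^ n) ` F \<in> M45_faces"
    by (rule M45_faces.T)
  then show ?case by (simp add: image_comp)
qed (simp add: assms)

lemma T_vert_image_in_faces_iff: "T_vert ` F \<in> M45_faces \<longleftrightarrow> F \<in> M45_faces"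
proof
  assume "T_vert ` F \<in> M45_faces"
  then have "(T_vert ^^ 4) ` T_vert ` F \<in> M45_faces"
    by (rule funpow_image_T_vert_faces)
  then show "F \<in> M45_faces"
    by (simp add: image_comp funpow_T_vert_4_inverse)
qed (rule M45_faces.T)

lemma T_vert_centre: "T_vert centre = centre"
  by (simp add: centre_def T_vert_hfv)

lemma centre_neighbour_hfv:
  assumes "u \<in> M45_vertices" and "M45_adj centre u"
  obtains b where "u = hfv True b 1"
proof -
  obtain k x y where u: "u = hfv k x y"
    using assms(1) by (auto simp: M45_vertices_def)
  obtain a c b d where ac: "(False, a, c) \<in> centre" and bd: "(True, b, d) \<in> u"
    and det: "a * d - 2 * b * c = 1 \<or> a * d - 2 * b * c = -1"
    using assms(2) by (auto simp: M45_adj_def centre_def hfv_def)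
  have d: "d = 1 \<or> d = -1"
    using ac det by (auto simp: centre_def hfv_def minus_equation_iff)
  have "u = hfv True b d"
    using bd unfolding u by (rule hfv_eq_if_mem)
  then show ?thesis
    using that d hfv_uminus[of True "-b" 1] by auto
qed

lemma T_vert_hfv_True_neq: "T_vert (hfv True b 1) \<noteq> hfv True b 1"
proof
  have "(True, b + 1, 1) \<in> T_vert (hfv True b 1)"
    unfolding T_vert_hfv by (simp add: hfv_def)
  moreover assume "T_vert (hfv True b 1) = hfv True b 1"
  ultimately show False
    by (simp add: hfv_def)
qed

lemma funpow_T_vert_hfv_True: "(T_vert ^^ n) (hfv True b 1) = hfv True (b + of_nat n) 1"
  by (induction n) (simp_all add: T_vert_hfv algebra_simps)

lemma funpow_T_vert_centre: "(T_vert ^^ n) centre = centre"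
  by (induction n) (simp_all add: T_vert_centre)

lemma centre_neighbours_in_face: "\<exists>F\<in>M45_faces. {centre, hfv True b 1, hfv True (b + 1) 1} \<subseteq> F"
proof -
  obtain n where b: "b = of_nat n"
    using ex_of_nat_5 by blast
  have "{centre, hfv True b 1, hfv True (b + 1) 1} =
      (T_vert ^^ n) ` {centre, hfv True 0 1, hfv True 1 1}"
    by (simp add: funpow_T_vert_centre funpow_T_vert_hfv_True b add.commute)
  also have "\<dots> \<subseteq> (T_vert ^^ n) ` base_face"
    by (rule image_mono) (simp add: base_face_def centre_def)
  finally show ?thesis
    using funpow_image_T_vert_faces[OF M45_faces.base] by blast
qed

theorem lemma1:
  shows "bij_betw T_vert M45_vertices M45_vertices
    \<and> (\<forall>u\<in>M45_vertices. \<forall>v\<in>M45_vertices. M45_adj (T_vert u) (T_vert v) \<longleftrightarrow> M45_adj u v)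
    \<and> (\<forall>F. F \<subseteq> M45_vertices \<longrightarrow> (T_vert ` F \<in> M45_faces \<longleftrightarrow> F \<in> M45_faces))
    \<and> T_vert centre = centre
    \<and> (\<forall>u\<in>M45_vertices. M45_adj centre u \<longrightarrow>
          T_vert u \<noteq> u \<and> (\<exists>F\<in>M45_faces. {centre, u, T_vert u} \<subseteq> F))
    \<and> (\<forall>u\<in>M45_vertices. (T_vert ^^ 5) u = u)"
proof (intro conjI ballI impI allI)
  fix u assume "u \<in> M45_vertices" and "M45_adj centre u"
  then obtain b where u: "u = hfv True b 1"
    by (rule centre_neighbour_hfv)
  show "T_vert u \<noteq> u"
    unfolding u by (rule T_vert_hfv_True_neq)
  show "\<exists>F\<in>M45_faces. {centre, u, T_vert u} \<subseteq> F"
    unfolding u T_vert_hfv by (rule centre_neighbours_in_face)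
qed (simp_all add: bij_betw_T_vert M45_adj_T_vert T_vert_image_in_faces_iff T_vert_centre
       funpow_T_vert_5)

end
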